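(* Let $(W,S)$ be a Coxeter system with $S$ finite, $\phi:\operatorname{Ad}(Q_W)\to W$ the homomorphism $e_x\mapsto x$, and $C_W=\ker\phi$. If $x,y\in Q_W$ are conjugate in $W$, then $e_x^2=e_y^2$, and this element lies in $C_W$.
   Context: A Coxeter system $(W,S)$: $S$ finite, $m:S\times S\to\mathbb{N}\cup\{\infty\}$ with $m(s,s)=1$, $2\le m(s,t)=m(t,s)\le\infty$ for $s\ne t$, $W=\langle s\in S\mid (st)^{m(s,t)}=1\ (m(s,t)<\infty)\rangle$. The Coxeter quandle is $Q_W=\bigcup_{w\in W}w^{-1}Sw$ with $x\ast y=yxy$, and $\operatorname{Ad}(Q_W)=\langle e_x\ (x\in Q_W)\mid e_y^{-1}e_xe_y=e_{x\ast y}\rangle$. *)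

theory Defs
  imports "HOL-Algebra.Coset" "HOL-Library.Extended_Nat"
begin

text \<open>A word over generators of type 'g is a list of letters (g, b); b = True means
  the inverse letter g^-1.\<close>

type_synonym 'g word = "('g \<times> bool) list"

inductive pg_eq :: "'g word set \<Rightarrow> 'g word \<Rightarrow> 'g word \<Rightarrow> bool" for R where
  pg_refl: "pg_eq R w w"
| pg_sym: "pg_eq R u v \<Longrightarrow> pg_eq R v u"
| pg_trans: "pg_eq R u v \<Longrightarrow> pg_eq R v w \<Longrightarrow> pg_eq R u w"
| pg_cancel: "pg_eq R (u @ [(g, b), (g, \<not> b)] @ v) (u @ v)"
| pg_rel: "r \<in> R \<Longrightarrow> pg_eq R (u @ r @ v) (u @ v)"

definition pg_class :: "'g word set \<Rightarrow> 'g word \<Rightarrow> 'g word set" where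
  "pg_class R w = {v. pg_eq R w v}"

definition presented_group :: "'g set \<Rightarrow> 'g word set \<Rightarrow> 'g word set monoid" where
  "presented_group G R =
     \<lparr> carrier = {pg_class R w | w. set (map fst w) \<subseteq> G},
       mult = (\<lambda>A B. {w. \<exists>u\<in>A. \<exists>v\<in>B. pg_eq R (u @ v) w}),
       one = pg_class R [] \<rparr>"

definition pg_gen :: "'g word set \<Rightarrow> 'g \<Rightarrow> 'g word set" where
  "pg_gen R g = pg_class R [(g, False)]"

definition word_eval :: "('b, 'c) monoid_scheme \<Rightarrow> ('g \<Rightarrow> 'b) \<Rightarrow> 'g word \<Rightarrow> 'b" where
  "word_eval H f w =
     foldr (\<lambda>(g, b) acc. (if b then inv\<^bsub>H\<^esub> (f g) else f g) \<otimes>\<^bsub>H\<^esub> acc) w \<one>\<^bsub>H\<^esub>"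

definition pg_induced :: "'g set \<Rightarrow> ('b, 'c) monoid_scheme \<Rightarrow> ('g \<Rightarrow> 'b) \<Rightarrow> 'g word set \<Rightarrow> 'b" where
  "pg_induced G H f A = word_eval H f (SOME w. w \<in> A \<and> set (map fst w) \<subseteq> G)"

definition coxeter_matrix :: "'a set \<Rightarrow> ('a \<Rightarrow> 'a \<Rightarrow> enat) \<Rightarrow> bool" where
  "coxeter_matrix S m \<longleftrightarrow> finite S \<and>
     (\<forall>s\<in>S. m s s = 1) \<and>
     (\<forall>s\<in>S. \<forall>t\<in>S. s \<noteq> t \<longrightarrow> 2 \<le> m s t \<and> m s t = m t s)"

text \<open>Relators (st)^m(s,t) for m(s,t) finite (for s = t this gives s^2).\<close>
definition coxeter_relators :: "'a set \<Rightarrow> ('a \<Rightarrow> 'a \<Rightarrow> enat) \<Rightarrow> 'a word set" where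
  "coxeter_relators S m =
     {concat (replicate k [(s, False), (t, False)]) | s t k. s \<in> S \<and> t \<in> S \<and> m s t = enat k}"

definition coxeter_group :: "'a set \<Rightarrow> ('a \<Rightarrow> 'a \<Rightarrow> enat) \<Rightarrow> 'a word set monoid" where
  "coxeter_group S m = presented_group S (coxeter_relators S m)"

definition cox_gen :: "'a set \<Rightarrow> ('a \<Rightarrow> 'a \<Rightarrow> enat) \<Rightarrow> 'a \<Rightarrow> 'a word set" where
  "cox_gen S m s = pg_gen (coxeter_relators S m) s"

definition coxeter_quandle :: "'a set \<Rightarrow> ('a \<Rightarrow> 'a \<Rightarrow> enat) \<Rightarrow> 'a word set set" where
  "coxeter_quandle S m =
     {inv\<^bsub>coxeter_group S m\<^esub> w \<otimes>\<^bsub>coxeter_group S m\<^esub> cox_gen S m s \<otimes>\<^bsub>coxeter_group S m\<^esub> w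
      | w s. w \<in> carrier (coxeter_group S m) \<and> s \<in> S}"

definition cq_op :: "'a set \<Rightarrow> ('a \<Rightarrow> 'a \<Rightarrow> enat) \<Rightarrow> 'a word set \<Rightarrow> 'a word set \<Rightarrow> 'a word set" where
  "cq_op S m x y = y \<otimes>\<^bsub>coxeter_group S m\<^esub> x \<otimes>\<^bsub>coxeter_group S m\<^esub> y"

definition adj_relators :: "'a set \<Rightarrow> ('a \<Rightarrow> 'a \<Rightarrow> enat) \<Rightarrow> 'a word set word set" where
  "adj_relators S m =
     {[(y, True), (x, False), (y, False), (cq_op S m x y, True)] | x y.
        x \<in> coxeter_quandle S m \<and> y \<in> coxeter_quandle S m}"

definition adj_group :: "'a set \<Rightarrow> ('a \<Rightarrow> 'a \<Rightarrow> enat) \<Rightarrow> 'a word set word set monoid" where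
  "adj_group S m = presented_group (coxeter_quandle S m) (adj_relators S m)"

definition adj_gen :: "'a set \<Rightarrow> ('a \<Rightarrow> 'a \<Rightarrow> enat) \<Rightarrow> 'a word set \<Rightarrow> 'a word set word set" where
  "adj_gen S m x = pg_gen (adj_relators S m) x"

definition adj_phi :: "'a set \<Rightarrow> ('a \<Rightarrow> 'a \<Rightarrow> enat) \<Rightarrow> 'a word set word set \<Rightarrow> 'a word set" where
  "adj_phi S m = pg_induced (coxeter_quandle S m) (coxeter_group S m) id"

end

theory Submission
  imports Defs
begin

text \<open>The defining relation gives e_y^-1 e_x e_y = e_(x*y); applying it twice and using
  (x*y)*y = x shows that e_y^2 commutes with every generator e_x. Hence
  e_(x*y)^2 = e_y^-1 e_x^2 e_y = e_x^2, and since x*s = s x s for the simple reflections s,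
  induction on the length of w gives e_(w^-1 x w)^2 = e_x^2. Finally phi(e_x^2) = x^2 = 1
  because every element of Q_W is an involution.\<close>

section \<open>Presented groups\<close>

lemma pg_eq_append_cong: "pg_eq R u v \<Longrightarrow> pg_eq R (p @ u @ q) (p @ v @ q)"
proof (induction rule: pg_eq.induct)
  case (pg_refl w) then show ?case by (rule pg_eq.pg_refl)
next
  case (pg_sym u v) then show ?case by (metis pg_eq.pg_sym)
next
  case (pg_trans u v w) then show ?case by (metis pg_eq.pg_trans)
next
  case (pg_cancel u g b v)
  show ?case using pg_eq.pg_cancel[of R "p @ u" g b "v @ q"] by simp
next
  case (pg_rel r u v)
  show ?case using pg_eq.pg_rel[OF pg_rel, of "p @ u" "v @ q"] by simp
qed

lemma pg_eq_append: "pg_eq R u u' \<Longrightarrow> pg_eq R v v' \<Longrightarrow> pg_eq R (u @ v) (u' @ v')"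
  by (metis pg_eq.pg_trans pg_eq_append_cong append_Nil append_Nil2)

lemma pg_class_eq_iff: "pg_class R u = pg_class R v \<longleftrightarrow> pg_eq R u v"
  unfolding pg_class_def
  by (auto intro: pg_eq.pg_refl) (metis pg_eq.pg_sym pg_eq.pg_trans)+

lemma presented_group_mult:
  "pg_class R u \<otimes>\<^bsub>presented_group G R\<^esub> pg_class R v = pg_class R (u @ v)"
  unfolding presented_group_def pg_class_def
  by (auto intro: pg_eq.pg_refl) (metis pg_eq.pg_trans pg_eq_append)

lemma presented_group_one: "\<one>\<^bsub>presented_group G R\<^esub> = pg_class R []"
  by (simp add: presented_group_def)

lemma presented_group_carrier:
  "carrier (presented_group G R) = {pg_class R w | w. set (map fst w) \<subseteq> G}"
  by (simp add: presented_group_def)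

definition word_inv :: "'g word \<Rightarrow> 'g word" where
  "word_inv w = rev (map (\<lambda>(g, b). (g, \<not> b)) w)"

lemma pg_eq_word_inv_append: "pg_eq R (word_inv w @ w) []"
proof (induction w)
  case Nil then show ?case by (simp add: word_inv_def pg_eq.pg_refl)
next
  case (Cons a w)
  obtain g b where a: "a = (g, b)" by fastforce
  have "pg_eq R (word_inv (a # w) @ a # w) (word_inv w @ w)"
    using pg_eq.pg_cancel[of R "word_inv w" g "\<not> b" w] by (simp add: word_inv_def a)
  with Cons show ?case by (metis pg_eq.pg_trans)
qed

lemma group_presented_group: "group (presented_group G R)"
proof (rule groupI)
  fix x y assume "x \<in> carrier (presented_group G R)" "y \<in> carrier (presented_group G R)"
  then obtain u v where "x = pg_class R u" "set (map fst u) \<subseteq> G"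
      "y = pg_class R v" "set (map fst v) \<subseteq> G"
    by (auto simp: presented_group_carrier)
  then show "x \<otimes>\<^bsub>presented_group G R\<^esub> y \<in> carrier (presented_group G R)"
    by (auto simp: presented_group_mult presented_group_carrier intro!: exI[of _ "u @ v"]) force+
next
  show "\<one>\<^bsub>presented_group G R\<^esub> \<in> carrier (presented_group G R)"
    by (auto simp: presented_group_one presented_group_carrier intro!: exI[of _ "[]"])
next
  fix x y z assume "x \<in> carrier (presented_group G R)" "y \<in> carrier (presented_group G R)"
    "z \<in> carrier (presented_group G R)"
  then show "x \<otimes>\<^bsub>presented_group G R\<^esub> y \<otimes>\<^bsub>presented_group G R\<^esub> z =
      x \<otimes>\<^bsub>presented_group G R\<^esub> (y \<otimes>\<^bsub>presented_group G R\<^esub> z)"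
    by (auto simp: presented_group_carrier presented_group_mult)
next
  fix x assume "x \<in> carrier (presented_group G R)"
  then show "\<one>\<^bsub>presented_group G R\<^esub> \<otimes>\<^bsub>presented_group G R\<^esub> x = x"
    by (auto simp: presented_group_carrier presented_group_mult presented_group_one)
next
  fix x assume "x \<in> carrier (presented_group G R)"
  then obtain u where u: "x = pg_class R u" "set (map fst u) \<subseteq> G"
    by (auto simp: presented_group_carrier)
  have "pg_class R (word_inv u) \<in> carrier (presented_group G R)"
    using u(2) by (force simp: presented_group_carrier word_inv_def)
  moreover have "pg_class R (word_inv u) \<otimes>\<^bsub>presented_group G R\<^esub> x = \<one>\<^bsub>presented_group G R\<^esub>"
    by (simp add: u(1) presented_group_mult presented_group_one pg_class_eq_iff
        pg_eq_word_inv_append)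
  ultimately show "\<exists>y\<in>carrier (presented_group G R). y \<otimes>\<^bsub>presented_group G R\<^esub> x = \<one>\<^bsub>presented_group G R\<^esub>"
    by blast
qed

lemma pg_gen_closed: "g \<in> G \<Longrightarrow> pg_gen R g \<in> carrier (presented_group G R)"
  unfolding pg_gen_def presented_group_carrier by force

lemma pg_class_relator: "r \<in> R \<Longrightarrow> pg_class R r = \<one>\<^bsub>presented_group G R\<^esub>"
  using pg_eq.pg_rel[of r R "[]" "[]"] by (simp add: presented_group_one pg_class_eq_iff)

lemma pg_class_inverse_letter:
  assumes "g \<in> G"
  shows "pg_class R [(g, True)] = inv\<^bsub>presented_group G R\<^esub> pg_gen R g"
proof -
  interpret group "presented_group G R" by (rule group_presented_group)
  have "pg_class R [(g, True)] \<otimes>\<^bsub>presented_group G R\<^esub> pg_gen R g = \<one>\<^bsub>presented_group G R\<^esub>"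
    using pg_eq.pg_cancel[of R "[]" g True "[]"]
    by (simp add: pg_gen_def presented_group_mult presented_group_one pg_class_eq_iff)
  moreover have "pg_class R [(g, True)] \<in> carrier (presented_group G R)"
    using assms by (force simp: presented_group_carrier)
  ultimately show ?thesis
    using inv_equality pg_gen_closed[OF assms] by metis
qed

lemma word_eval_Nil: "word_eval H f [] = \<one>\<^bsub>H\<^esub>"
  by (simp add: word_eval_def)

lemma word_eval_Cons:
  "word_eval H f ((g, b) # w) = (if b then inv\<^bsub>H\<^esub> (f g) else f g) \<otimes>\<^bsub>H\<^esub> word_eval H f w"
  by (simp add: word_eval_def)

lemma word_eval_cong:
  "(\<And>g. g \<in> set (map fst w) \<Longrightarrow> f g = f' g) \<Longrightarrow> word_eval H f w = word_eval H f' w"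
  by (induction w) (auto simp: word_eval_Nil word_eval_Cons)

lemma pg_class_eq_word_eval:
  "set (map fst w) \<subseteq> G \<Longrightarrow> pg_class R w = word_eval (presented_group G R) (pg_gen R) w"
proof (induction w)
  case Nil then show ?case by (simp add: word_eval_Nil presented_group_one)
next
  case (Cons a w)
  obtain g b where a: "a = (g, b)" by fastforce
  have "pg_class R (a # w) = pg_class R [(g, b)] \<otimes>\<^bsub>presented_group G R\<^esub> pg_class R w"
    by (simp add: a presented_group_mult)
  with Cons show ?case
    by (auto simp: a word_eval_Cons pg_class_inverse_letter pg_gen_def)
qed

context group
begin

lemma mult_inv_cancel_left: "x \<in> carrier G \<Longrightarrow> y \<in> carrier G \<Longrightarrow> x \<otimes> (inv x \<otimes> y) = y"
  by (simp add: m_assoc[symmetric])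

lemma word_eval_closed: "(\<And>g. f g \<in> carrier G) \<Longrightarrow> word_eval G f w \<in> carrier G"
  by (induction w) (auto simp: word_eval_Nil word_eval_Cons)

lemma word_eval_append:
  "(\<And>g. f g \<in> carrier G) \<Longrightarrow> word_eval G f (u @ v) = word_eval G f u \<otimes> word_eval G f v"
proof (induction u)
  case Nil then show ?case by (simp add: word_eval_Nil word_eval_closed)
next
  case (Cons a u)
  obtain g b where a: "a = (g, b)" by fastforce
  show ?case using Cons by (simp add: a word_eval_Cons m_assoc word_eval_closed)
qed

lemma word_eval_pg_eq:
  assumes f: "\<And>g. f g \<in> carrier G" and R: "\<And>r. r \<in> R \<Longrightarrow> word_eval G f r = \<one>"
  shows "pg_eq R u v \<Longrightarrow> word_eval G f u = word_eval G f v"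
proof (induction rule: pg_eq.induct)
  case (pg_cancel u g b v)
  have "word_eval G f [(g, b), (g, \<not> b)] = \<one>"
    using f[of g] by (auto simp: word_eval_Cons word_eval_Nil)
  then show ?case
    by (simp add: word_eval_append[OF f] word_eval_closed[OF f] m_assoc[symmetric]
        del: append.simps)
next
  case (pg_rel r u v)
  then show ?case
    by (simp add: word_eval_append[OF f] word_eval_closed[OF f] R del: append.simps)
qed auto

text \<open>The representative picked by pg_induced is only pg_eq-related to w, and the derivation
  may pass through letters outside A; hence the assignment is first extended by 1 outside A.\<close>

lemma pg_induced_pg_class:
  assumes f: "f ` A \<subseteq> carrier G"
    and R: "\<And>r. r \<in> R \<Longrightarrow> set (map fst r) \<subseteq> A \<and> word_eval G f r = \<one>"
    and w: "set (map fst w) \<subseteq> A"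
  shows "pg_induced A G f (pg_class R w) = word_eval G f w"
proof -
  define f' where "f' g = (if g \<in> A then f g else \<one>)" for g
  have f'_closed: "f' g \<in> carrier G" for g
    using f by (auto simp: f'_def)
  have f'_word: "word_eval G f' u = word_eval G f u" if "set (map fst u) \<subseteq> A" for u
    using that by (intro word_eval_cong) (auto simp: f'_def)
  have f'_R: "word_eval G f' r = \<one>" if "r \<in> R" for r
    using R[OF that] f'_word by simp
  let ?P = "\<lambda>u. u \<in> pg_class R w \<and> set (map fst u) \<subseteq> A"
  have "?P w" using w by (simp add: pg_class_def pg_eq.pg_refl)
  then have P: "?P (SOME u. ?P u)" by (rule someI)
  have "pg_induced A G f (pg_class R w) = word_eval G f' (SOME u. ?P u)"
    using P f'_word by (simp add: pg_induced_def)
  also have "\<dots> = word_eval G f' w"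
    using P word_eval_pg_eq[of f' R, OF f'_closed f'_R] by (simp add: pg_class_def) metis
  finally show ?thesis using f'_word[OF w] by simp
qed

end

section \<open>Coxeter groups and their quandles\<close>

locale coxeter_system =
  fixes S :: "'a set" and m :: "'a \<Rightarrow> 'a \<Rightarrow> enat"
  assumes coxeter_matrix: "coxeter_matrix S m"
begin

sublocale W: group "coxeter_group S m"
  unfolding coxeter_group_def by (rule group_presented_group)

abbreviation W where "W \<equiv> coxeter_group S m"
abbreviation Q where "Q \<equiv> coxeter_quandle S m"

lemma cox_gen_closed: "s \<in> S \<Longrightarrow> cox_gen S m s \<in> carrier W"
  unfolding cox_gen_def coxeter_group_def by (rule pg_gen_closed)

lemma cox_gen_square: "s \<in> S \<Longrightarrow> cox_gen S m s \<otimes>\<^bsub>W\<^esub> cox_gen S m s = \<one>\<^bsub>W\<^esub>"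
proof -
  assume s: "s \<in> S"
  then have "[(s, False), (s, False)] \<in> coxeter_relators S m"
    using coxeter_matrix unfolding coxeter_relators_def coxeter_matrix_def
    by (auto intro!: exI[of _ s] exI[of _ 1] simp: one_enat_def)
  then show ?thesis
    using pg_class_relator[of _ "coxeter_relators S m" S]
    by (simp add: cox_gen_def pg_gen_def coxeter_group_def presented_group_mult)
qed

lemma cox_gen_inv: "s \<in> S \<Longrightarrow> inv\<^bsub>W\<^esub> cox_gen S m s = cox_gen S m s"
  by (simp add: W.inv_equality cox_gen_closed cox_gen_square)

lemma coxeter_group_induct [consumes 1, case_names one gen]:
  assumes "w \<in> carrier W" and "P \<one>\<^bsub>W\<^esub>"
    and "\<And>s w. s \<in> S \<Longrightarrow> w \<in> carrier W \<Longrightarrow> P w \<Longrightarrow> P (cox_gen S m s \<otimes>\<^bsub>W\<^esub> w)"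
  shows "P w"
proof -
  obtain u where u: "w = pg_class (coxeter_relators S m) u" "set (map fst u) \<subseteq> S"
    using assms(1) by (auto simp: coxeter_group_def presented_group_carrier)
  from u(2) have "pg_class (coxeter_relators S m) u \<in> carrier W
      \<and> P (pg_class (coxeter_relators S m) u)"
  proof (induction u)
    case Nil
    then show ?case using assms(2) W.one_closed by (simp add: coxeter_group_def presented_group_one)
  next
    case (Cons a u)
    obtain s b where a: "a = (s, b)" and s: "s \<in> S" and u: "set (map fst u) \<subseteq> S"
      using Cons.prems by (cases a) auto
    have "pg_class (coxeter_relators S m) [(s, b)] = cox_gen S m s"
      using s cox_gen_inv
        pg_class_inverse_letter[where g = s and G = S and R = "coxeter_relators S m"]
      by (cases b) (simp_all add: cox_gen_def pg_gen_def coxeter_group_def)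
    then have "pg_class (coxeter_relators S m) (a # u)
        = cox_gen S m s \<otimes>\<^bsub>W\<^esub> pg_class (coxeter_relators S m) u"
      using presented_group_mult[where G = S and R = "coxeter_relators S m" and u = "[(s, b)]"]
      by (simp add: a coxeter_group_def)
    then show ?case using Cons.IH[OF u] assms(3)[OF s] cox_gen_closed[OF s] by simp
  qed
  then show ?thesis using u(1) by simp
qed

lemma quandle_closed: "x \<in> Q \<Longrightarrow> x \<in> carrier W"
  unfolding coxeter_quandle_def by (auto intro!: cox_gen_closed)

lemma quandle_square:
  assumes "x \<in> Q"
  shows "x \<otimes>\<^bsub>W\<^esub> x = \<one>\<^bsub>W\<^esub>"
proof -
  obtain v s where v: "v \<in> carrier W" and s: "s \<in> S"
    and x: "x = inv\<^bsub>W\<^esub> v \<otimes>\<^bsub>W\<^esub> cox_gen S m s \<otimes>\<^bsub>W\<^esub> v"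
    using assms unfolding coxeter_quandle_def by auto
  have "x \<otimes>\<^bsub>W\<^esub> x = inv\<^bsub>W\<^esub> v \<otimes>\<^bsub>W\<^esub> (cox_gen S m s \<otimes>\<^bsub>W\<^esub> cox_gen S m s) \<otimes>\<^bsub>W\<^esub> v"
    using v cox_gen_closed[OF s] by (simp add: x W.m_assoc) (simp add: W.m_assoc[symmetric])
  then show ?thesis using v by (simp add: cox_gen_square[OF s])
qed

lemma quandle_inv: "x \<in> Q \<Longrightarrow> inv\<^bsub>W\<^esub> x = x"
  by (simp add: W.inv_equality quandle_closed quandle_square)

lemma quandle_conj_closed:
  assumes "x \<in> Q" and w: "w \<in> carrier W"
  shows "inv\<^bsub>W\<^esub> w \<otimes>\<^bsub>W\<^esub> x \<otimes>\<^bsub>W\<^esub> w \<in> Q"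
proof -
  obtain v s where v: "v \<in> carrier W" and s: "s \<in> S"
    and x: "x = inv\<^bsub>W\<^esub> v \<otimes>\<^bsub>W\<^esub> cox_gen S m s \<otimes>\<^bsub>W\<^esub> v"
    using assms(1) unfolding coxeter_quandle_def by auto
  have "inv\<^bsub>W\<^esub> w \<otimes>\<^bsub>W\<^esub> x \<otimes>\<^bsub>W\<^esub> w
      = inv\<^bsub>W\<^esub> (v \<otimes>\<^bsub>W\<^esub> w) \<otimes>\<^bsub>W\<^esub> cox_gen S m s \<otimes>\<^bsub>W\<^esub> (v \<otimes>\<^bsub>W\<^esub> w)"
    using v w cox_gen_closed[OF s] by (simp add: x W.inv_mult_group W.m_assoc)
  then show ?thesis
    using v w s unfolding coxeter_quandle_def by blast
qed

lemma cox_gen_in_quandle: "s \<in> S \<Longrightarrow> cox_gen S m s \<in> Q"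
  unfolding coxeter_quandle_def
  by (force intro!: exI[of _ "\<one>\<^bsub>W\<^esub>"] simp: cox_gen_closed)

lemma cq_op_eq_conj: "y \<in> Q \<Longrightarrow> cq_op S m x y = inv\<^bsub>W\<^esub> y \<otimes>\<^bsub>W\<^esub> x \<otimes>\<^bsub>W\<^esub> y"
  by (simp add: cq_op_def quandle_inv)

lemma cq_op_closed: "x \<in> Q \<Longrightarrow> y \<in> Q \<Longrightarrow> cq_op S m x y \<in> Q"
  by (simp add: cq_op_eq_conj quandle_conj_closed quandle_closed)

lemma cq_op_cq_op: "x \<in> Q \<Longrightarrow> y \<in> Q \<Longrightarrow> cq_op S m (cq_op S m x y) y = x"
  by (simp add: cq_op_def W.m_assoc quandle_closed)
    (simp add: W.m_assoc[symmetric] quandle_closed quandle_square)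

section \<open>The adjoint group\<close>

sublocale Ad: group "adj_group S m"
  unfolding adj_group_def by (rule group_presented_group)

abbreviation Ad where "Ad \<equiv> adj_group S m"
abbreviation e where "e \<equiv> adj_gen S m"

lemma adj_gen_closed: "x \<in> Q \<Longrightarrow> e x \<in> carrier Ad"
  unfolding adj_gen_def adj_group_def by (rule pg_gen_closed)

lemma adj_gen_conj:
  assumes x: "x \<in> Q" and y: "y \<in> Q"
  shows "inv\<^bsub>Ad\<^esub> e y \<otimes>\<^bsub>Ad\<^esub> e x \<otimes>\<^bsub>Ad\<^esub> e y = e (cq_op S m x y)"
proof -
  let ?r = "[(y, True), (x, False), (y, False), (cq_op S m x y, True)]"
  have "?r \<in> adj_relators S m" using x y unfolding adj_relators_def by blast
  then have "pg_class (adj_relators S m) ?r = \<one>\<^bsub>Ad\<^esub>"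
    unfolding adj_group_def by (rule pg_class_relator)
  moreover have "e = pg_gen (adj_relators S m)"
    by (simp add: adj_gen_def fun_eq_iff)
  then have "pg_class (adj_relators S m) ?r = word_eval Ad e ?r"
    using x y cq_op_closed[OF x y]
      pg_class_eq_word_eval[where G = Q and R = "adj_relators S m" and w = ?r]
    by (simp add: adj_group_def)
  ultimately have "inv\<^bsub>Ad\<^esub> e y \<otimes>\<^bsub>Ad\<^esub> e x \<otimes>\<^bsub>Ad\<^esub> e y \<otimes>\<^bsub>Ad\<^esub> inv\<^bsub>Ad\<^esub> e (cq_op S m x y) = \<one>\<^bsub>Ad\<^esub>"
    using x y cq_op_closed[OF x y]
    by (simp add: word_eval_Cons word_eval_Nil adj_gen_closed Ad.m_assoc)
  then show ?thesis
    using x y cq_op_closed[OF x y] by (simp add: Ad.inv_solve_right' adj_gen_closed)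
qed

text \<open>Conjugating e_x twice by e_y gives e_((x*y)*y) = e_x.\<close>

lemma adj_gen_commute_square:
  assumes x: "x \<in> Q" and y: "y \<in> Q"
  shows "e x \<otimes>\<^bsub>Ad\<^esub> (e y \<otimes>\<^bsub>Ad\<^esub> e y) = e y \<otimes>\<^bsub>Ad\<^esub> e y \<otimes>\<^bsub>Ad\<^esub> e x"
proof -
  have "e x = inv\<^bsub>Ad\<^esub> e y \<otimes>\<^bsub>Ad\<^esub> (inv\<^bsub>Ad\<^esub> e y \<otimes>\<^bsub>Ad\<^esub> e x \<otimes>\<^bsub>Ad\<^esub> e y) \<otimes>\<^bsub>Ad\<^esub> e y"
    using adj_gen_conj[OF cq_op_closed[OF x y] y] adj_gen_conj[OF x y] cq_op_cq_op[OF x y]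
    by simp
  then have "e x = inv\<^bsub>Ad\<^esub> (e y \<otimes>\<^bsub>Ad\<^esub> e y) \<otimes>\<^bsub>Ad\<^esub> e x \<otimes>\<^bsub>Ad\<^esub> (e y \<otimes>\<^bsub>Ad\<^esub> e y)"
    using x y by (simp add: adj_gen_closed Ad.inv_mult_group Ad.m_assoc)
  then show ?thesis
    using x y Ad.inv_solve_left[of "e x" "e y \<otimes>\<^bsub>Ad\<^esub> e y" "e x \<otimes>\<^bsub>Ad\<^esub> (e y \<otimes>\<^bsub>Ad\<^esub> e y)"]
    by (simp add: adj_gen_closed Ad.m_assoc)
qed

lemma adj_gen_square_cq_op:
  assumes x: "x \<in> Q" and y: "y \<in> Q"
  shows "e (cq_op S m x y) \<otimes>\<^bsub>Ad\<^esub> e (cq_op S m x y) = e x \<otimes>\<^bsub>Ad\<^esub> e x"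
proof -
  have "e (cq_op S m x y) \<otimes>\<^bsub>Ad\<^esub> e (cq_op S m x y)
      = inv\<^bsub>Ad\<^esub> e y \<otimes>\<^bsub>Ad\<^esub> (e x \<otimes>\<^bsub>Ad\<^esub> e x) \<otimes>\<^bsub>Ad\<^esub> e y"
    using x y adj_gen_conj[OF x y, symmetric]
    by (simp add: adj_gen_closed Ad.m_assoc) (simp add: adj_gen_closed Ad.m_assoc[symmetric])
  also have "\<dots> = e x \<otimes>\<^bsub>Ad\<^esub> e x"
    using x y adj_gen_commute_square[OF y x]
    by (simp add: adj_gen_closed Ad.m_assoc Ad.inv_solve_left')
  finally show ?thesis .
qed

lemma adj_gen_square_conj:
  assumes "w \<in> carrier W"
  shows "x \<in> Q \<Longrightarrow> e (inv\<^bsub>W\<^esub> w \<otimes>\<^bsub>W\<^esub> x \<otimes>\<^bsub>W\<^esub> w) \<otimes>\<^bsub>Ad\<^esub> e (inv\<^bsub>W\<^esub> w \<otimes>\<^bsub>W\<^esub> x \<otimes>\<^bsub>W\<^esub> w)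
    = e x \<otimes>\<^bsub>Ad\<^esub> e x"
  using assms
proof (induction arbitrary: x rule: coxeter_group_induct)
  case one
  then show ?case by (simp add: quandle_closed)
next
  case (gen s w)
  let ?s = "cox_gen S m s"
  have "inv\<^bsub>W\<^esub> (?s \<otimes>\<^bsub>W\<^esub> w) \<otimes>\<^bsub>W\<^esub> x \<otimes>\<^bsub>W\<^esub> (?s \<otimes>\<^bsub>W\<^esub> w)
      = inv\<^bsub>W\<^esub> w \<otimes>\<^bsub>W\<^esub> cq_op S m x ?s \<otimes>\<^bsub>W\<^esub> w"
    using gen cox_gen_closed[OF gen(1)] quandle_closed[OF gen(4)]
    by (simp add: cq_op_eq_conj cox_gen_in_quandle W.inv_mult_group W.m_assoc)
  then show ?case
    using gen.IH[OF cq_op_closed[OF gen(4) cox_gen_in_quandle[OF gen(1)]]]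
      adj_gen_square_cq_op[OF gen(4) cox_gen_in_quandle[OF gen(1)]]
    by simp
qed

lemma adj_phi_adj_gen_square:
  assumes x: "x \<in> Q"
  shows "adj_phi S m (e x \<otimes>\<^bsub>Ad\<^esub> e x) = \<one>\<^bsub>W\<^esub>"
proof -
  have relators: "set (map fst r) \<subseteq> Q \<and> word_eval W id r = \<one>\<^bsub>W\<^esub>"
    if r: "r \<in> adj_relators S m" for r
  proof -
    obtain a b where r_eq: "r = [(b, True), (a, False), (b, False), (cq_op S m a b, True)]"
      and a: "a \<in> Q" and b: "b \<in> Q"
      using r unfolding adj_relators_def by blast
    show ?thesis
      using a b cq_op_closed[OF a b] quandle_closed[OF a] quandle_closed[OF b]
      by (simp add: r_eq word_eval_Cons word_eval_Nil cq_op_eq_conj W.inv_mult_group W.m_assoc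
          W.mult_inv_cancel_left)
  qed
  have "e x \<otimes>\<^bsub>Ad\<^esub> e x = pg_class (adj_relators S m) [(x, False), (x, False)]"
    by (simp add: adj_gen_def pg_gen_def adj_group_def presented_group_mult)
  then have "adj_phi S m (e x \<otimes>\<^bsub>Ad\<^esub> e x) = word_eval W id [(x, False), (x, False)]"
    using W.pg_induced_pg_class[of id Q "adj_relators S m", OF _ relators] quandle_closed x
    by (simp add: adj_phi_def subset_eq)
  then show ?thesis
    using x by (simp add: word_eval_Cons word_eval_Nil quandle_closed quandle_square)
qed

end

theorem lemma2p6:
  fixes S :: "'a set" and m :: "'a \<Rightarrow> 'a \<Rightarrow> enat"
  assumes "coxeter_matrix S m"
    and "x \<in> coxeter_quandle S m" and "y \<in> coxeter_quandle S m"
    and "\<exists>w\<in>carrier (coxeter_group S m).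
           y = inv\<^bsub>coxeter_group S m\<^esub> w \<otimes>\<^bsub>coxeter_group S m\<^esub> x \<otimes>\<^bsub>coxeter_group S m\<^esub> w"
  shows "adj_gen S m x \<otimes>\<^bsub>adj_group S m\<^esub> adj_gen S m x
           = adj_gen S m y \<otimes>\<^bsub>adj_group S m\<^esub> adj_gen S m y
         \<and> adj_gen S m x \<otimes>\<^bsub>adj_group S m\<^esub> adj_gen S m x
             \<in> kernel (adj_group S m) (coxeter_group S m) (adj_phi S m)"
proof -
  interpret coxeter_system S m by standard (rule assms(1))
  obtain w where "w \<in> carrier W" and "y = inv\<^bsub>W\<^esub> w \<otimes>\<^bsub>W\<^esub> x \<otimes>\<^bsub>W\<^esub> w"
    using assms(4) by blast
  then have "e y \<otimes>\<^bsub>Ad\<^esub> e y = e x \<otimes>\<^bsub>Ad\<^esub> e x"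
    using adj_gen_square_conj assms(2) by simp
  moreover have "e x \<otimes>\<^bsub>Ad\<^esub> e x \<in> kernel Ad W (adj_phi S m)"
    using assms(2) adj_gen_closed adj_phi_adj_gen_square by (simp add: kernel_def)
  ultimately show ?thesis by simp
qed

end
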